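(* Let $M$ be a finite set of alternatives, $\mathcal{R}$ the set of weak preference orders on $M$, and $\varphi:\mathcal{R}\to\Delta(M)$ a mechanism. If $\varphi$ is strategyproof, then it is separation upper invariant and separation lower invariant.
   Context: A preference order is a complete, transitive relation $R$ on $M$; $a\,I\,b$ means $a\,R\,b$ and $b\,R\,a$; $a\,P\,b$ means $a\,R\,b$ and not $b\,R\,a$. Write $R$ as $M_1\,P\,\cdots\,P\,M_K$ where $(M_k)$ are the nonempty indifference classes ordered so that $a\,P\,b$ for $a\in M_k$, $b\in M_{k'}$, $k<k'$. For $A\subseteq M$, $\varphi_A(R)=\sum_{a\in A}(\varphi(R))_a$. A lottery $x$ first order-stochastically dominates $y$ at $R$ if $\sum_{j: j R a}x_j\ge\sum_{j: j R a}y_j$ for all $a\in M$. $\varphi$ is strategyproof if $\varphi(R)$ first order-stochastically dominates $\varphi(R')$ at $R$ for all $R,R'\in\mathcal{R}$. A separation is a pair $(R,R')$ such that, with $R=M_1\,P\,\cdots\,P\,M_K$, there are $\kappa\in\{1,\dots,K\}$ and a partition of $M_\kappa$ into disjoint nonempty $M_\kappa^1,M_\kappa^2$ with $R'=M_1\,P'\,\cdots\,P'\,M_{\kappa-1}\,P'\,M_\kappa^1\,P'\,M_\kappa^2\,P'\,M_{\kappa+1}\,P'\,\cdots\,P'\,M_K$ (indifference within each listed set). $\varphi$ is separation upper invariant if for every separation $(R,R')$, $\varphi_{M_k}(R)=\varphi_{M_k}(R')$ for all $k\in\{1,\dots,\kappa-1\}$; separation lower invariant if for every separation, $\varphi_{M_k}(R)=\varphi_{M_k}(R')$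 for all $k\in\{\kappa+1,\dots,K\}$. *)

theory Defs
  imports Complex_Main
begin

text \<open>Alternatives: a finite type 'a (so M = UNIV). A (weak) preference order is a
complete, transitive relation on M, represented as a binary predicate.\<close>

definition pref_orders :: "('a \<Rightarrow> 'a \<Rightarrow> bool) set" where
  "pref_orders = {R. (\<forall>a b. R a b \<or> R b a) \<and> (\<forall>a b c. R a b \<longrightarrow> R b c \<longrightarrow> R a c)}"

definition indiff :: "('a \<Rightarrow> 'a \<Rightarrow> bool) \<Rightarrow> 'a \<Rightarrow> 'a \<Rightarrow> bool" where
  "indiff R a b \<longleftrightarrow> R a b \<and> R b a"

definition strict :: "('a \<Rightarrow> 'a \<Rightarrow> bool) \<Rightarrow> 'a \<Rightarrow> 'a \<Rightarrow> bool" where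
  "strict R a b \<longleftrightarrow> R a b \<and> \<not> R b a"

definition ind_class :: "('a \<Rightarrow> 'a \<Rightarrow> bool) \<Rightarrow> 'a \<Rightarrow> 'a set" where
  "ind_class R a = {b. indiff R a b}"

definition lotteries :: "('a::finite \<Rightarrow> real) set" where
  "lotteries = {x. (\<forall>a. x a \<ge> 0) \<and> (\<Sum>a\<in>UNIV. x a) = 1}"

definition mechanism :: "(('a::finite \<Rightarrow> 'a \<Rightarrow> bool) \<Rightarrow> ('a \<Rightarrow> real)) \<Rightarrow> bool" where
  "mechanism \<phi> \<longleftrightarrow> (\<forall>R\<in>pref_orders. \<phi> R \<in> lotteries)"

definition phiA :: "(('a \<Rightarrow> 'a \<Rightarrow> bool) \<Rightarrow> ('a \<Rightarrow> real)) \<Rightarrow> 'a set \<Rightarrow> ('a \<Rightarrow> 'a \<Rightarrow> bool) \<Rightarrow> real" where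
  "phiA \<phi> A R = (\<Sum>a\<in>A. \<phi> R a)"

definition fosd :: "('a::finite \<Rightarrow> 'a \<Rightarrow> bool) \<Rightarrow> ('a \<Rightarrow> real) \<Rightarrow> ('a \<Rightarrow> real) \<Rightarrow> bool" where
  "fosd R x y \<longleftrightarrow> (\<forall>a. (\<Sum>j\<in>{j. R j a}. x j) \<ge> (\<Sum>j\<in>{j. R j a}. y j))"

definition strategyproof :: "(('a::finite \<Rightarrow> 'a \<Rightarrow> bool) \<Rightarrow> ('a \<Rightarrow> real)) \<Rightarrow> bool" where
  "strategyproof \<phi> \<longleftrightarrow> (\<forall>R\<in>pref_orders. \<forall>R'\<in>pref_orders. fosd R (\<phi> R) (\<phi> R'))"

text \<open>(R,R') is a separation splitting the indifference class C = M_kappa of R into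
C1 (ranked strictly above) and C2; everything else unchanged.\<close>
definition separation :: "('a \<Rightarrow> 'a \<Rightarrow> bool) \<Rightarrow> ('a \<Rightarrow> 'a \<Rightarrow> bool) \<Rightarrow> 'a set \<Rightarrow> 'a set \<Rightarrow> 'a set \<Rightarrow> bool" where
  "separation R R' C C1 C2 \<longleftrightarrow>
     R \<in> pref_orders \<and> (\<exists>c. C = ind_class R c) \<and>
     C1 \<noteq> {} \<and> C2 \<noteq> {} \<and> C1 \<inter> C2 = {} \<and> C1 \<union> C2 = C \<and>
     (\<forall>x y. R' x y \<longleftrightarrow> (if x \<in> C \<and> y \<in> C then x \<in> C1 \<or> y \<in> C2 else R x y))"

definition sep_upper_invariant :: "(('a \<Rightarrow> 'a \<Rightarrow> bool) \<Rightarrow> ('a \<Rightarrow> real)) \<Rightarrow> bool" where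
  "sep_upper_invariant \<phi> \<longleftrightarrow> (\<forall>R R' C C1 C2. separation R R' C C1 C2 \<longrightarrow>
     (\<forall>b c. c \<in> C \<and> strict R b c \<longrightarrow> phiA \<phi> (ind_class R b) R = phiA \<phi> (ind_class R b) R'))"

definition sep_lower_invariant :: "(('a \<Rightarrow> 'a \<Rightarrow> bool) \<Rightarrow> ('a \<Rightarrow> real)) \<Rightarrow> bool" where
  "sep_lower_invariant \<phi> \<longleftrightarrow> (\<forall>R R' C C1 C2. separation R R' C C1 C2 \<longrightarrow>
     (\<forall>b c. c \<in> C \<and> strict R c b \<longrightarrow> phiA \<phi> (ind_class R b) R = phiA \<phi> (ind_class R b) R'))"

end

theory Submission
  imports Defs
begin

text \<open>A separation only refines R, so every upper contour set of R is also an upper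
contour set of R' (that of an element of the lower part C2 when the set ends in the split
class). Strategyproofness applied in both directions, at R and at R', therefore forces
\<phi> R and \<phi> R' to give equal probability to every upper contour set of R. An indifference
class of R is the difference of two such sets (the strict upper set being either empty or
the upper set of its lowest element), so \<phi> R and \<phi> R' agree on every indifference class
of R, in particular on those above and below the split class.\<close>

lemma pref_ordersD:
  assumes "R \<in> pref_orders"
  shows pref_orders_total: "R a b \<or> R b a"
    and pref_orders_trans: "R a b \<Longrightarrow> R b c \<Longrightarrow> R a c"
  using assms unfolding pref_orders_def by blast+

lemma pref_orders_has_lowest:
  assumes R: "R \<in> pref_orders" and "finite A" "A \<noteq> {}"
  shows "\<exists>a\<in>A. \<forall>j\<in>A. R j a"
  using \<open>finite A\<close> \<open>A \<noteq> {}\<close>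
proof (induction A rule: finite_ne_induct)
  case (singleton x)
  then show ?case using pref_orders_total[OF R] by blast
next
  case (insert x F)
  then obtain a where "a \<in> F" "\<forall>j\<in>F. R j a" by blast
  then show ?case using pref_orders_total[OF R] pref_orders_trans[OF R] by blast
qed

lemma strict_upper_set_cases:
  fixes R :: "'a::finite \<Rightarrow> 'a \<Rightarrow> bool"
  assumes R: "R \<in> pref_orders"
  shows "{j. strict R j b} = {} \<or> (\<exists>a. {j. strict R j b} = {j. R j a})"
proof (cases "{j. strict R j b} = {}")
  case False
  then obtain a where a: "a \<in> {j. strict R j b}" "\<forall>j\<in>{j. strict R j b}. R j a"
    using pref_orders_has_lowest[OF R finite] by meson
  then have "{j. strict R j b} = {j. R j a}"
    using pref_orders_trans[OF R] unfolding strict_def by auto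
  then show ?thesis by blast
qed simp

lemma sum_ind_class_eq_if_upper_sets_eq:
  fixes R :: "'a::finite \<Rightarrow> 'a \<Rightarrow> bool" and x y :: "'a \<Rightarrow> real"
  assumes R: "R \<in> pref_orders"
    and upper: "\<And>a. (\<Sum>j\<in>{j. R j a}. x j) = (\<Sum>j\<in>{j. R j a}. y j)"
  shows "(\<Sum>j\<in>ind_class R b. x j) = (\<Sum>j\<in>ind_class R b. y j)"
proof -
  define S where "S = {j. strict R j b}"
  have S_sub: "S \<subseteq> {j. R j b}"
    unfolding S_def strict_def by blast
  have ind_class_diff: "ind_class R b = {j. R j b} - S"
    unfolding S_def strict_def ind_class_def indiff_def using pref_orders_total[OF R] by blast
  have "(\<Sum>j\<in>S. x j) = (\<Sum>j\<in>S. y j)"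
    using strict_upper_set_cases[OF R, of b] upper unfolding S_def by auto
  then show ?thesis
    unfolding ind_class_diff using sum_diff[OF finite S_sub, of x] sum_diff[OF finite S_sub, of y] upper
    by simp
qed

lemma separation_class_iff:
  assumes sep: "separation R R' C C1 C2" and "c \<in> C"
  shows "x \<in> C \<longleftrightarrow> R c x \<and> R x c"
proof -
  obtain c0 where C: "C = ind_class R c0" and R: "R \<in> pref_orders"
    using sep unfolding separation_def by blast
  have "R c0 c" "R c c0"
    using \<open>c \<in> C\<close> unfolding C ind_class_def indiff_def by simp_all
  then show ?thesis
    unfolding C ind_class_def indiff_def using pref_orders_trans[OF R] by blast
qed

lemma separation_imp_le:
  assumes sep: "separation R R' C C1 C2" and "R' x y"
  shows "R x y"
proof (cases "x \<in> C \<and> y \<in> C")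
  case True
  then show ?thesis using separation_class_iff[OF sep] by blast
next
  case False
  then show ?thesis using \<open>R' x y\<close> sep unfolding separation_def by simp
qed

lemma separation_pref_orders:
  assumes sep: "separation R R' C C1 C2"
  shows "R' \<in> pref_orders"
proof -
  have R: "R \<in> pref_orders" and parts: "C1 \<inter> C2 = {}" "C1 \<union> C2 = C"
    and R'_iff: "\<And>x y. R' x y \<longleftrightarrow> (if x \<in> C \<and> y \<in> C then x \<in> C1 \<or> y \<in> C2 else R x y)"
    using sep unfolding separation_def by auto
  have "R' a b \<or> R' b a" for a b
    using parts pref_orders_total[OF R] unfolding R'_iff by auto
  moreover have "R' a d" if ab: "R' a b" and bd: "R' b d" for a b d
  proof -
    have "R a b" "R b d"
      using separation_imp_le[OF sep] ab bd by blast+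
    then have "R a d" using pref_orders_trans[OF R] by blast
    moreover have "b \<in> C" if "a \<in> C" "d \<in> C"
      using separation_class_iff[OF sep \<open>a \<in> C\<close>] \<open>R a b\<close> \<open>R b d\<close> that pref_orders_trans[OF R]
      by blast
    ultimately show ?thesis
      using ab bd parts unfolding R'_iff by (auto split: if_splits)
  qed
  ultimately show ?thesis unfolding pref_orders_def by blast
qed

lemma separation_upper_set:
  assumes sep: "separation R R' C C1 C2"
  obtains a' where "{j. R j a} = {j. R' j a'}"
proof -
  have R: "R \<in> pref_orders" and parts: "C1 \<inter> C2 = {}" "C1 \<union> C2 = C" "C2 \<noteq> {}"
    and R'_iff: "\<And>x y. R' x y \<longleftrightarrow> (if x \<in> C \<and> y \<in> C then x \<in> C1 \<or> y \<in> C2 else R x y)"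
    using sep unfolding separation_def by auto
  have same: "{j. R j a'} = {j. R' j a'}" if "a' \<notin> C1" for a'
    using that parts separation_class_iff[OF sep] pref_orders_trans[OF R] unfolding R'_iff
    by auto
  show ?thesis
  proof (cases "a \<in> C1")
    case True
    obtain c2 where "c2 \<in> C2" using parts by blast
    then have "{j. R j a} = {j. R j c2}"
      using True parts separation_class_iff[OF sep] pref_orders_trans[OF R] by blast
    also have "\<dots> = {j. R' j c2}"
      using same \<open>c2 \<in> C2\<close> parts by blast
    finally show ?thesis by (rule that)
  next
    case False
    then show ?thesis using same that by blast
  qed
qed

lemma strategyproof_separation_ind_class_eq:
  assumes sp: "strategyproof \<phi>" and sep: "separation R R' C C1 C2"
  shows "phiA \<phi> (ind_class R b) R = phiA \<phi> (ind_class R b) R'"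
proof -
  have R: "R \<in> pref_orders" using sep unfolding separation_def by blast
  have R': "R' \<in> pref_orders" using separation_pref_orders[OF sep] .
  have "(\<Sum>j\<in>{j. R j a}. \<phi> R j) = (\<Sum>j\<in>{j. R j a}. \<phi> R' j)" for a
  proof -
    obtain a' where upper: "{j. R j a} = {j. R' j a'}"
      using separation_upper_set[OF sep] .
    have "(\<Sum>j\<in>{j. R j a}. \<phi> R j) \<ge> (\<Sum>j\<in>{j. R j a}. \<phi> R' j)"
      using sp R R' unfolding strategyproof_def fosd_def by blast
    moreover have "(\<Sum>j\<in>{j. R' j a'}. \<phi> R' j) \<ge> (\<Sum>j\<in>{j. R' j a'}. \<phi> R j)"
      using sp R R' unfolding strategyproof_def fosd_def by blast
    ultimately show ?thesis unfolding upper by simp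
  qed
  then show ?thesis
    unfolding phiA_def by (rule sum_ind_class_eq_if_upper_sets_eq[OF R])
qed

theorem lemma1:
  fixes \<phi> :: "('a::finite \<Rightarrow> 'a \<Rightarrow> bool) \<Rightarrow> ('a \<Rightarrow> real)"
  assumes "mechanism \<phi>" and "strategyproof \<phi>"
  shows "sep_upper_invariant \<phi> \<and> sep_lower_invariant \<phi>"
  using strategyproof_separation_ind_class_eq[OF assms(2)]
  unfolding sep_upper_invariant_def sep_lower_invariant_def by blast

end
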